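(* Let $D$ be a friendship digraph of order $n$. Then $\bigl(d^-(u)-1\bigr)\bigl(d^-(v)-1\bigr)\leq n-2$ for any two distinct vertices $u$ and $v$ of $D$.
   Context: All digraphs are finite and have neither loops nor parallel arcs (a pair of opposite arcs $(u,v)$ and $(v,u)$ is allowed). $d^-(v)$ is the indegree of $v$. A friendship digraph is a nontrivial digraph (at least two vertices) in which any two distinct vertices have exactly one common out-neighbor. *)

theory Defs
  imports Main
begin

definition digraph :: "'a set \<Rightarrow> ('a \<times> 'a) set \<Rightarrow> bool" where
  "digraph V A \<longleftrightarrow> finite V \<and> A \<subseteq> V \<times> V \<and> (\<forall>v. (v, v) \<notin> A)"

definition out_nbrs :: "('a \<times> 'a) set \<Rightarrow> 'a \<Rightarrow> 'a set" where
  "out_nbrs A u = {w. (u, w) \<in> A}"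

definition indeg :: "'a set \<Rightarrow> ('a \<times> 'a) set \<Rightarrow> 'a \<Rightarrow> nat" where
  "indeg V A v = card {w \<in> V. (w, v) \<in> A}"

definition friendship_digraph :: "'a set \<Rightarrow> ('a \<times> 'a) set \<Rightarrow> bool" where
  "friendship_digraph V A \<longleftrightarrow> digraph V A \<and> card V \<ge> 2 \<and>
     (\<forall>u\<in>V. \<forall>v\<in>V. u \<noteq> v \<longrightarrow>
        (\<exists>!w. w \<in> out_nbrs A u \<and> w \<in> out_nbrs A v))"

end

theory Submission
  imports Defs
begin

text \<open>Distinct vertices u and v have at most one common in-neighbour, since two of them would share
  both u and v as out-neighbours. Hence the in-neighbourhoods of u and v contain sets X and Y,
  disjoint from the other neighbourhood, of sizes at least indeg u - 1 and indeg v - 1.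
  Sending (x, y) \<in> X \<times> Y to the common out-neighbour of x and y is injective and avoids u and v:
  the image is not u because y is no in-neighbour of u, and if (x, y) and (x', y) had the same
  image w, then x and x' would have both u and w as common out-neighbours, forcing w = u.
  So |X| |Y| \<le> n - 2. A vanishing in-degree is covered by n \<ge> 3, which holds because two
  vertices have a common out-neighbour distinct from both.\<close>

definition in_nbrs :: "'a set \<Rightarrow> ('a \<times> 'a) set \<Rightarrow> 'a \<Rightarrow> 'a set" where
  "in_nbrs V A v = {w \<in> V. (w, v) \<in> A}"

lemma indeg_eq_card_in_nbrs: "indeg V A v = card (in_nbrs V A v)"
  unfolding indeg_def in_nbrs_def ..

definition common_out_nbr :: "('a \<times> 'a) set \<Rightarrow> 'a \<Rightarrow> 'a \<Rightarrow> 'a" where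
  "common_out_nbr A x y = (THE w. (x, w) \<in> A \<and> (y, w) \<in> A)"

lemma shifted_product_le:
  fixes a b p q m :: nat
  assumes "p \<le> a + 1" and "q \<le> b + 1" and "a * b \<le> m" and "1 \<le> m"
  shows "(int p - 1) * (int q - 1) \<le> int m"
proof (cases "p = 0 \<or> q = 0")
  case True
  then show ?thesis using assms(4) by auto
next
  case False
  then have "(int p - 1) * (int q - 1) \<le> int a * int b"
    using assms(1,2) by (intro mult_mono) auto
  also have "\<dots> \<le> int m" using assms(3) by (metis of_nat_le_iff of_nat_mult)
  finally show ?thesis .
qed

context
  fixes V :: "'a set" and A :: "('a \<times> 'a) set"
  assumes friendship: "friendship_digraph V A"
begin

lemma friendship_digraph_finite: "finite V"
  using friendship unfolding friendship_digraph_def digraph_def by blast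

lemma friendship_digraph_arcs_subset: "A \<subseteq> V \<times> V"
  using friendship unfolding friendship_digraph_def digraph_def by blast

lemma friendship_digraph_no_loop: "(x, x) \<notin> A"
  using friendship unfolding friendship_digraph_def digraph_def by blast

lemma common_out_nbr_unique:
  assumes "x \<in> V" "y \<in> V" "x \<noteq> y"
    and "(x, w) \<in> A" "(y, w) \<in> A" "(x, w') \<in> A" "(y, w') \<in> A"
  shows "w = w'"
  using friendship assms unfolding friendship_digraph_def out_nbrs_def by blast

lemma common_out_nbr_arcs:
  assumes "x \<in> V" "y \<in> V" "x \<noteq> y"
  shows "(x, common_out_nbr A x y) \<in> A" and "(y, common_out_nbr A x y) \<in> A"
proof -
  obtain w where w: "(x, w) \<in> A" "(y, w) \<in> A"
    using friendship assms unfolding friendship_digraph_def out_nbrs_def by blast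
  have "common_out_nbr A x y = w"
    unfolding common_out_nbr_def
    using w common_out_nbr_unique[OF assms] by (intro the_equality) auto
  with w show "(x, common_out_nbr A x y) \<in> A" "(y, common_out_nbr A x y) \<in> A" by auto
qed

lemma card_vertices_ge_3: "3 \<le> card V"
proof -
  obtain u v where uv: "u \<in> V" "v \<in> V" "u \<noteq> v"
    using friendship unfolding friendship_digraph_def
    by (metis card_le_Suc0_iff_eq friendship_digraph_finite not_less_eq_eq numeral_2_eq_2)
  define w where "w = common_out_nbr A u v"
  have w: "(u, w) \<in> A" "(v, w) \<in> A"
    using common_out_nbr_arcs[OF uv] unfolding w_def by auto
  then have "w \<in> V" "w \<noteq> u" "w \<noteq> v"
    using friendship_digraph_arcs_subset friendship_digraph_no_loop by auto
  then have "card {u, v, w} = 3" using uv(3) by simp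
  moreover have "{u, v, w} \<subseteq> V" using uv \<open>w \<in> V\<close> by simp
  ultimately show ?thesis using card_mono[OF friendship_digraph_finite] by metis
qed

lemma card_common_in_nbrs_le_1:
  assumes "u \<noteq> v"
  shows "card (in_nbrs V A u \<inter> in_nbrs V A v) \<le> 1"
proof -
  have "x = y" if "x \<in> in_nbrs V A u \<inter> in_nbrs V A v" "y \<in> in_nbrs V A u \<inter> in_nbrs V A v" for x y
    using that assms common_out_nbr_unique[of x y u v] unfolding in_nbrs_def by blast
  then show ?thesis
    using friendship_digraph_finite card_le_Suc0_iff_eq[of "in_nbrs V A u \<inter> in_nbrs V A v"]
    unfolding in_nbrs_def by auto
qed

lemma card_in_nbrs_le_card_Diff_Suc:
  assumes "u \<noteq> v"
  shows "card (in_nbrs V A u) \<le> card (in_nbrs V A u - in_nbrs V A v) + 1"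
  using card_Int_Diff[of "in_nbrs V A u" "in_nbrs V A v"] card_common_in_nbrs_le_1[OF assms]
    friendship_digraph_finite unfolding in_nbrs_def by simp

lemma card_exclusive_in_nbrs_product_le:
  assumes "u \<in> V" "v \<in> V" "u \<noteq> v"
  defines "X \<equiv> in_nbrs V A u - in_nbrs V A v" and "Y \<equiv> in_nbrs V A v - in_nbrs V A u"
  shows "card X * card Y \<le> card V - 2"
proof -
  let ?f = "\<lambda>(x, y). common_out_nbr A x y"
  have arcs: "(x, common_out_nbr A x y) \<in> A" "(y, common_out_nbr A x y) \<in> A"
    if "x \<in> X" "y \<in> Y" for x y
    using that common_out_nbr_arcs[of x y] unfolding X_def Y_def in_nbrs_def by auto
  have "?f ` (X \<times> Y) \<subseteq> V - {u, v}"
  proof (rule image_subsetI, clarify)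
    fix x y assume xy: "x \<in> X" "y \<in> Y"
    have "(y, u) \<notin> A" "(x, v) \<notin> A"
      using xy unfolding X_def Y_def in_nbrs_def by auto
    then show "common_out_nbr A x y \<in> V - {u, v}"
      using arcs[OF xy] friendship_digraph_arcs_subset by auto
  qed
  moreover have "inj_on ?f (X \<times> Y)"
  proof (rule inj_onI, clarify)
    fix x y x' y'
    assume xy: "x \<in> X" "y \<in> Y" "x' \<in> X" "y' \<in> Y"
      and eq: "common_out_nbr A x y = common_out_nbr A x' y'"
    have "x = x'"
    proof (rule ccontr)
      assume "x \<noteq> x'"
      then have "u = common_out_nbr A x y"
        using common_out_nbr_unique[of x x' u] arcs[OF xy(1,2)] arcs[OF xy(3,4)] eq xy
        unfolding X_def in_nbrs_def by auto
      then show False using arcs[OF xy(1,2)] xy(2) unfolding Y_def in_nbrs_def by auto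
    qed
    moreover have "y = y'"
    proof (rule ccontr)
      assume "y \<noteq> y'"
      then have "v = common_out_nbr A x y"
        using common_out_nbr_unique[of y y' v] arcs[OF xy(1,2)] arcs[OF xy(3,4)] eq xy
        unfolding Y_def in_nbrs_def by auto
      then show False using arcs[OF xy(1,2)] xy(1) unfolding X_def in_nbrs_def by auto
    qed
    ultimately show "x = x' \<and> y = y'" ..
  qed
  ultimately have "card (X \<times> Y) \<le> card (V - {u, v})"
    using card_inj_on_le friendship_digraph_finite by blast
  then show ?thesis using assms(1-3) by (simp add: card_cartesian_product)
qed

end

theorem lemma2p6:
  fixes V :: "'a set" and A :: "('a \<times> 'a) set"
  assumes "friendship_digraph V A"
    and "u \<in> V" and "v \<in> V" and "u \<noteq> v"
  shows "(int (indeg V A u) - 1) * (int (indeg V A v) - 1) \<le> int (card V) - 2"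
proof -
  let ?X = "in_nbrs V A u - in_nbrs V A v" and ?Y = "in_nbrs V A v - in_nbrs V A u"
  have "card (in_nbrs V A u) \<le> card ?X + 1" "card (in_nbrs V A v) \<le> card ?Y + 1"
    using card_in_nbrs_le_card_Diff_Suc[OF assms(1)] assms(4) by auto
  moreover have "card ?X * card ?Y \<le> card V - 2"
    using card_exclusive_in_nbrs_product_le[OF assms] .
  moreover have "1 \<le> card V - 2"
    using card_vertices_ge_3[OF assms(1)] by simp
  ultimately have "(int (indeg V A u) - 1) * (int (indeg V A v) - 1) \<le> int (card V - 2)"
    unfolding indeg_eq_card_in_nbrs by (rule shifted_product_le)
  then show ?thesis using card_vertices_ge_3[OF assms(1)] by simp
qed

end
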